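(* Let $Q>0$ and $\Gamma>0$. Let $f$ be a nonnegative random variable with a continuous probability density function, and let $I$ be a nonnegative random variable independent of $f$ with $\mathbb{E}[I]=\Gamma$. Let $\mu_a>0$ satisfy $\mathbb{E}\left[\left(\frac{1}{\mu_a}-\frac{1+I}{f}\right)^+\right]=Q$, and let $\mu_p>0$ satisfy $\mathbb{E}\left[\left(\frac{1}{\mu_p}-\frac{1+\Gamma}{f}\right)^+\right]=Q$. Define $$C^{{\rm ER},a}_{\rm PR,WF}=\mathbb{E}\left[\left(\log\frac{f}{\mu_a(1+I)}\right)^+\right],\qquad C^{{\rm ER},p}_{\rm PR,WF}=\mathbb{E}\left[\left(\log\frac{f}{\mu_p(1+\Gamma)}\right)^+\right].$$ Then $C^{{\rm ER},a}_{\rm PR,WF}\geq C^{{\rm ER},p}_{\rm PR,WF}$.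
   Context: $(a)^+=\max(0,a)$. Setting: a primary radio (PR) fading link with channel power gain $f$ and unit noise power. $I$ is the interference power from a cognitive radio at the PR receiver, independent of $f$. The average-interference-power (AIP) case has random $I$ with $\mathbb{E}[I]=\Gamma$. The peak-interference-power (PIP) case has interference equal to $\Gamma$ always. The PR uses water-filling power control $q=(1/\mu-(1+I)/f)^+$ (respectively $(1/\mu-(1+\Gamma)/f)^+$), subject to average transmit power $Q$. Thus $C^{{\rm ER},a}_{\rm PR,WF}$ and $C^{{\rm ER},p}_{\rm PR,WF}$ are the PR ergodic capacities $\max_{q\ge0,\,\mathbb{E}[q]\le Q}\mathbb{E}[\log(1+fq/(1+I))]$ (respectively with $I$ replaced by $\Gamma$), attained by water-filling. *)

theory Defs
  imports "HOL-Probability.Probability"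
begin

definition pos_part :: "real \<Rightarrow> real" where
  "pos_part a = max 0 a"

end

theory Submission
  imports Defs
begin

text \<open>The PIP water-filling power \<open>q\<^sub>p(f)\<close> spends the same average power \<open>Q\<close>, so it is a
feasible AIP policy. Water-filling is optimal for the AIP link, which follows pointwise from the
Lagrangian inequality \<open>ln (1 + x q / n) - \<mu> q \<le> (ln (x / (\<mu> n)))\<^sup>+ - \<mu> q\<^sup>*(x)\<close>; hence
\<open>C\<^sub>a \<ge> E[ln (1 + f q\<^sub>p(f) / (1 + I))]\<close>. The map \<open>i \<mapsto> ln (1 + a / (1 + i))\<close> is convex, and the slope
of its tangent at \<open>\<Gamma>\<close> depends only on \<open>a = f q\<^sub>p(f)\<close>. Since \<open>f\<close> and \<open>I\<close> are independent with
\<open>E[I] = \<Gamma>\<close>, the linear term of the tangent bound averages out, leaving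
\<open>E[ln (1 + a / (1 + I))] \<ge> E[ln (1 + a / (1 + \<Gamma>))] = C\<^sub>p\<close>.\<close>

lemma pos_part_nonneg: "pos_part x \<ge> 0"
  by (simp add: pos_part_def)

lemma pos_part_measurable [measurable]:
  "h \<in> borel_measurable N \<Longrightarrow> (\<lambda>x. pos_part (h x)) \<in> borel_measurable N"
  unfolding pos_part_def by (intro borel_measurable_max) auto

lemma waterfilling_lagrangian_le:
  fixes x n \<mu> q :: real
  assumes "x > 0" "n > 0" "\<mu> > 0" "q \<ge> 0"
  shows "ln (1 + x * q / n) + \<mu> * pos_part (1/\<mu> - n/x) \<le> pos_part (ln (x / (\<mu> * n))) + \<mu> * q"
proof (cases "x \<le> \<mu> * n")
  case True
  have "1/\<mu> - n/x \<le> 0" and "ln (x / (\<mu> * n)) \<le> 0"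
    using True assms by (simp_all add: field_simps)
  moreover have "ln (1 + x * q / n) \<le> x * q / n"
    using assms by (intro ln_add_one_self_le_self) simp
  moreover have "x * q / n \<le> \<mu> * q"
    using mult_right_mono[OF True \<open>q \<ge> 0\<close>] assms by (simp add: field_simps)
  ultimately show ?thesis by (simp add: pos_part_def)
next
  case False
  have split: "1 + x * q / n = x / (\<mu> * n) * (\<mu> * n / x + \<mu> * q)"
    using assms by (simp add: field_simps)
  have factors_pos: "x / (\<mu> * n) > 0" "\<mu> * n / x + \<mu> * q > 0"
    using assms by (simp_all add: add_pos_nonneg)
  have "ln (1 + x * q / n) - ln (x / (\<mu> * n)) = ln (\<mu> * n / x + \<mu> * q)"
    using ln_mult_pos[OF factors_pos] unfolding split by linarith
  also have "\<dots> \<le> \<mu> * n / x + \<mu> * q - 1"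
    using factors_pos(2) by (rule ln_le_minus_one)
  finally have "ln (1 + x * q / n) - ln (x / (\<mu> * n)) \<le> \<mu> * n / x + \<mu> * q - 1" .
  moreover have "\<mu> * (1/\<mu> - n/x) = 1 - \<mu> * n / x"
    using assms by (simp add: field_simps)
  moreover have pos_parts: "pos_part (1/\<mu> - n/x) = 1/\<mu> - n/x"
    "pos_part (ln (x / (\<mu> * n))) = ln (x / (\<mu> * n))"
    using False assms by (simp_all add: pos_part_def field_simps)
  ultimately show ?thesis
    unfolding pos_parts by linarith
qed

lemma pos_part_ln_eq_ln_waterfilling:
  fixes x n \<mu> :: real
  assumes "x > 0" "n > 0" "\<mu> > 0"
  shows "pos_part (ln (x / (\<mu> * n))) = ln (1 + x * pos_part (1/\<mu> - n/x) / n)"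
proof (cases "x \<le> \<mu> * n")
  case True
  then show ?thesis using assms by (simp add: pos_part_def field_simps)
next
  case False
  then have "1 + x * (1/\<mu> - n/x) / n = x / (\<mu> * n)"
    using assms by (simp add: field_simps)
  then show ?thesis using False assms by (simp add: pos_part_def field_simps)
qed

lemma ln_one_plus_div_tangent_le:
  fixes a p r :: real
  assumes "a \<ge> 0" "p > 0" "r > 0"
  shows "ln (1 + a / r) + a / (r * (r + a)) * (r - p) \<le> ln (1 + a / p)"
proof -
  define z c D where "z = p * (r + a) / (r * (p + a))" and "c = a / (r * (r + a))"
    and "D = r * (p + a) * (r + a)"
  have "1 + a / r > 0" "1 + a / p > 0"
    using assms by (simp_all add: add_pos_nonneg)
  moreover have "z = (1 + a / r) / (1 + a / p)"
    using assms by (simp add: z_def field_simps)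
  ultimately have ln_z: "ln (1 + a / r) - ln (1 + a / p) = ln z" and z_pos: "z > 0"
    by (simp_all add: ln_div)
  have D_pos: "D > 0" using assms by (simp add: D_def)
  have zD: "z * D = p * (r + a)^2"
    using assms by (simp add: z_def D_def power2_eq_square)
  have cD: "c * D = a * (p + a)"
    using assms by (simp add: c_def D_def)
  have "(z - 1 + c * (r - p)) * D = z * D - D + c * D * (r - p)"
    by (simp add: algebra_simps)
  also have "\<dots> = - (a * (r - p)^2)"
    unfolding zD cD by (simp add: D_def power2_eq_square algebra_simps)
  also have "\<dots> \<le> 0" using assms by simp
  finally have "z - 1 + c * (r - p) \<le> 0"
    using D_pos by (simp add: mult_le_0_iff)
  with ln_z ln_le_minus_one[OF z_pos] show ?thesis
    by (simp add: c_def)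
qed

lemma ennreal_add_le_add_real:
  fixes a b c d :: real
  assumes "0 \<le> a" "0 \<le> b" "0 \<le> c" "0 \<le> d" "a + b \<le> c + d"
  shows "ennreal a + ennreal b \<le> ennreal c + ennreal d"
  using assms by (simp add: ennreal_plus [symmetric] del: ennreal_plus)

lemma nn_integral_mono_AE_add_cancel:
  fixes u v w z :: "'a \<Rightarrow> ennreal"
  assumes [measurable]: "u \<in> borel_measurable M" "v \<in> borel_measurable M"
    "w \<in> borel_measurable M" "z \<in> borel_measurable M"
    and le: "AE x in M. u x + v x \<le> w x + z x"
    and compensation: "(\<integral>\<^sup>+x. z x \<partial>M) \<le> (\<integral>\<^sup>+x. v x \<partial>M)"
    and finite: "(\<integral>\<^sup>+x. v x \<partial>M) \<noteq> \<infinity>"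
  shows "(\<integral>\<^sup>+x. u x \<partial>M) \<le> (\<integral>\<^sup>+x. w x \<partial>M)"
proof -
  have "(\<integral>\<^sup>+x. v x \<partial>M) + (\<integral>\<^sup>+x. u x \<partial>M) = (\<integral>\<^sup>+x. u x + v x \<partial>M)"
    by (simp add: nn_integral_add add.commute)
  also have "\<dots> \<le> (\<integral>\<^sup>+x. w x + z x \<partial>M)"
    using le by (rule nn_integral_mono_AE)
  also have "\<dots> = (\<integral>\<^sup>+x. w x \<partial>M) + (\<integral>\<^sup>+x. z x \<partial>M)"
    by (simp add: nn_integral_add)
  also have "\<dots> \<le> (\<integral>\<^sup>+x. v x \<partial>M) + (\<integral>\<^sup>+x. w x \<partial>M)"
    using compensation by (simp add: add.commute add_left_mono)
  finally show ?thesis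
    using finite by (simp add: ennreal_add_left_cancel_le)
qed

lemma (in prob_space) indep_var_nn_integral:
  fixes X Y :: "'a \<Rightarrow> ennreal"
  assumes "indep_var borel X borel Y"
  shows "(\<integral>\<^sup>+\<omega>. X \<omega> * Y \<omega> \<partial>M) = (\<integral>\<^sup>+\<omega>. X \<omega> \<partial>M) * (\<integral>\<^sup>+\<omega>. Y \<omega> \<partial>M)"
proof -
  have "case_bool borel borel = (\<lambda>_. borel :: ennreal measure)"
    by (simp add: fun_eq_iff split: bool.split)
  then have indep: "indep_vars (\<lambda>_. borel) (case_bool X Y) UNIV"
    using assms by (simp add: indep_var_def)
  have "(\<integral>\<^sup>+\<omega>. (\<Prod>i\<in>UNIV. case_bool X Y i \<omega>) \<partial>M) = (\<Prod>i\<in>UNIV. \<integral>\<^sup>+\<omega>. case_bool X Y i \<omega> \<partial>M)"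
    by (rule indep_vars_nn_integral) (use indep in auto)
  then show ?thesis
    by (simp add: UNIV_bool mult.commute)
qed

lemma (in prob_space) distributed_AE_neq:
  fixes X :: "'a \<Rightarrow> 'b :: euclidean_space"
  assumes "distributed M lborel X g"
  shows "AE \<omega> in M. X \<omega> \<noteq> c"
proof -
  have "AE x in distr M lborel X. x \<noteq> c"
    unfolding distributed_distr_eq_density[OF assms]
    using AE_lborel_singleton[of c]
    by (subst AE_density[OF distributed_borel_measurable[OF assms]]) auto
  then show ?thesis
    by (rule AE_distrD[OF distributed_measurable[OF assms]])
qed

lemma nn_integral_waterfilling_optimal:
  fixes x n q :: "'a \<Rightarrow> real" and \<mu> :: real
  assumes "\<mu> > 0"
    and [measurable]: "x \<in> borel_measurable M" "n \<in> borel_measurable M" "q \<in> borel_measurable M"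
    and pos: "AE \<omega> in M. x \<omega> > 0 \<and> n \<omega> > 0 \<and> q \<omega> \<ge> 0"
    and budget: "(\<integral>\<^sup>+\<omega>. ennreal (q \<omega>) \<partial>M) \<le> (\<integral>\<^sup>+\<omega>. ennreal (pos_part (1/\<mu> - n \<omega> / x \<omega>)) \<partial>M)"
    and finite: "(\<integral>\<^sup>+\<omega>. ennreal (pos_part (1/\<mu> - n \<omega> / x \<omega>)) \<partial>M) \<noteq> \<infinity>"
  shows "(\<integral>\<^sup>+\<omega>. ennreal (ln (1 + x \<omega> * q \<omega> / n \<omega>)) \<partial>M)
       \<le> (\<integral>\<^sup>+\<omega>. ennreal (pos_part (ln (x \<omega> / (\<mu> * n \<omega>)))) \<partial>M)"
proof (rule nn_integral_mono_AE_add_cancel)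
  show "AE \<omega> in M. ennreal (ln (1 + x \<omega> * q \<omega> / n \<omega>)) + ennreal \<mu> * ennreal (pos_part (1/\<mu> - n \<omega> / x \<omega>))
      \<le> ennreal (pos_part (ln (x \<omega> / (\<mu> * n \<omega>)))) + ennreal \<mu> * ennreal (q \<omega>)"
    using pos
  proof eventually_elim
    case (elim \<omega>)
    then show ?case
      using \<open>\<mu> > 0\<close> waterfilling_lagrangian_le[of "x \<omega>" "n \<omega>" \<mu> "q \<omega>"]
      by (simp add: ennreal_mult [symmetric] ennreal_add_le_add_real pos_part_nonneg)
  qed
  show "(\<integral>\<^sup>+\<omega>. ennreal \<mu> * ennreal (q \<omega>) \<partial>M)
      \<le> (\<integral>\<^sup>+\<omega>. ennreal \<mu> * ennreal (pos_part (1/\<mu> - n \<omega> / x \<omega>)) \<partial>M)"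
    using budget by (simp add: nn_integral_cmult mult_left_mono)
  show "(\<integral>\<^sup>+\<omega>. ennreal \<mu> * ennreal (pos_part (1/\<mu> - n \<omega> / x \<omega>)) \<partial>M) \<noteq> \<infinity>"
    using finite by (simp add: nn_integral_cmult ennreal_mult_eq_top_iff)
qed simp_all

lemma (in prob_space) nn_integral_ln_mean_interference_le:
  fixes a I :: "'a \<Rightarrow> real" and \<Gamma> :: real
  assumes indep: "indep_var borel a borel I"
    and nonneg: "AE \<omega> in M. a \<omega> \<ge> 0 \<and> I \<omega> \<ge> 0"
    and mean: "(\<integral>\<^sup>+\<omega>. ennreal (I \<omega>) \<partial>M) = ennreal \<Gamma>" and "\<Gamma> \<ge> 0"
  shows "(\<integral>\<^sup>+\<omega>. ennreal (ln (1 + a \<omega> / (1 + \<Gamma>))) \<partial>M)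
       \<le> (\<integral>\<^sup>+\<omega>. ennreal (ln (1 + a \<omega> / (1 + I \<omega>))) \<partial>M)"
proof -
  define c where "c t = t / ((1 + \<Gamma>) * ((1 + \<Gamma>) + t))" for t
  have [measurable]: "a \<in> borel_measurable M" "I \<in> borel_measurable M"
    using indep_var_rv1[OF indep] indep_var_rv2[OF indep] by simp_all
  have [measurable]: "c \<in> borel_measurable borel"
    unfolding c_def[abs_def] by measurable
  have c_bound: "0 \<le> c t \<and> c t \<le> 1" if "t \<ge> 0" for t
  proof -
    have "t \<le> 1 * ((1 + \<Gamma>) + t)" using \<open>\<Gamma> \<ge> 0\<close> by simp
    also have "\<dots> \<le> (1 + \<Gamma>) * ((1 + \<Gamma>) + t)"
      using that \<open>\<Gamma> \<ge> 0\<close> by (intro mult_right_mono) simp_all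
    finally show ?thesis
      using that \<open>\<Gamma> \<ge> 0\<close> by (simp add: c_def)
  qed
  have "(\<integral>\<^sup>+\<omega>. ennreal (c (a \<omega>)) \<partial>M) \<le> (\<integral>\<^sup>+\<omega>. 1 \<partial>M)"
    using nonneg by (intro nn_integral_mono_AE) (auto elim!: eventually_mono simp: c_bound)
  then have c_finite: "(\<integral>\<^sup>+\<omega>. ennreal (c (a \<omega>)) \<partial>M) * ennreal \<Gamma> \<noteq> \<infinity>"
    by (auto simp: emeasure_space_1 ennreal_mult_eq_top_iff top_unique)
  have "indep_var borel ((\<lambda>t. ennreal (c t)) \<circ> a) borel (ennreal \<circ> I)"
    by (rule indep_var_compose[OF indep]) simp_all
  then have decouple: "(\<integral>\<^sup>+\<omega>. ennreal (c (a \<omega>)) * ennreal (I \<omega>) \<partial>M)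
      = (\<integral>\<^sup>+\<omega>. ennreal (c (a \<omega>)) \<partial>M) * ennreal \<Gamma>"
    using indep_var_nn_integral by (simp add: o_def mean)
  show ?thesis
  proof (rule nn_integral_mono_AE_add_cancel)
    show "AE \<omega> in M. ennreal (ln (1 + a \<omega> / (1 + \<Gamma>))) + ennreal (c (a \<omega>)) * ennreal \<Gamma>
        \<le> ennreal (ln (1 + a \<omega> / (1 + I \<omega>))) + ennreal (c (a \<omega>)) * ennreal (I \<omega>)"
      using nonneg
    proof eventually_elim
      case (elim \<omega>)
      have "ln (1 + a \<omega> / (1 + \<Gamma>)) + c (a \<omega>) * ((1 + \<Gamma>) - (1 + I \<omega>))
          \<le> ln (1 + a \<omega> / (1 + I \<omega>))"
        unfolding c_def using elim \<open>\<Gamma> \<ge> 0\<close> by (intro ln_one_plus_div_tangent_le) auto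
      then have "ln (1 + a \<omega> / (1 + \<Gamma>)) + c (a \<omega>) * \<Gamma> \<le> ln (1 + a \<omega> / (1 + I \<omega>)) + c (a \<omega>) * I \<omega>"
        by (simp add: algebra_simps)
      then show ?case
        using elim c_bound[of "a \<omega>"] \<open>\<Gamma> \<ge> 0\<close>
        by (simp add: ennreal_mult [symmetric] ennreal_add_le_add_real)
    qed
    show "(\<integral>\<^sup>+\<omega>. ennreal (c (a \<omega>)) * ennreal (I \<omega>) \<partial>M) \<le> (\<integral>\<^sup>+\<omega>. ennreal (c (a \<omega>)) * ennreal \<Gamma> \<partial>M)"
      by (simp add: decouple nn_integral_multc)
    show "(\<integral>\<^sup>+\<omega>. ennreal (c (a \<omega>)) * ennreal \<Gamma> \<partial>M) \<noteq> \<infinity>"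
      using c_finite by (simp add: nn_integral_multc)
  qed simp_all
qed

theorem theorem4p2:
  fixes M :: "'a measure" and f I :: "'a \<Rightarrow> real" and g :: "real \<Rightarrow> real"
    and Q \<Gamma> \<mu>a \<mu>p :: real
  assumes "prob_space M"
    and "Q > 0" and "\<Gamma> > 0"
    and f_dens: "distributed M lborel f (\<lambda>x. ennreal (g x))"
    and g_cont: "continuous_on {0..} g"
    and f_nonneg: "AE \<omega> in M. f \<omega> \<ge> 0"
    and I_meas: "I \<in> borel_measurable M"
    and I_nonneg: "AE \<omega> in M. I \<omega> \<ge> 0"
    and indep: "prob_space.indep_var M borel f borel I"
    and I_mean: "(\<integral>\<^sup>+ \<omega>. ennreal (I \<omega>) \<partial>M) = ennreal \<Gamma>"
    and "\<mu>a > 0"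
    and mu_a: "(\<integral>\<^sup>+ \<omega>. ennreal (pos_part (1 / \<mu>a - (1 + I \<omega>) / f \<omega>)) \<partial>M) = ennreal Q"
    and "\<mu>p > 0"
    and mu_p: "(\<integral>\<^sup>+ \<omega>. ennreal (pos_part (1 / \<mu>p - (1 + \<Gamma>) / f \<omega>)) \<partial>M) = ennreal Q"
  shows "(\<integral>\<^sup>+ \<omega>. ennreal (pos_part (ln (f \<omega> / (\<mu>a * (1 + I \<omega>))))) \<partial>M)
       \<ge> (\<integral>\<^sup>+ \<omega>. ennreal (pos_part (ln (f \<omega> / (\<mu>p * (1 + \<Gamma>))))) \<partial>M)"
proof -
  \<comment> \<open>The density of \<open>f\<close> only serves to rule out an atom at \<open>f = 0\<close>.\<close>
  interpret prob_space M by fact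
  have [measurable]: "f \<in> borel_measurable M"
    using distributed_measurable[OF f_dens] by simp
  note I_meas [measurable]
  have f_pos: "AE \<omega> in M. f \<omega> > 0"
    using distributed_AE_neq[OF f_dens, of 0] f_nonneg by eventually_elim auto
  define q where "q \<omega> = pos_part (1 / \<mu>p - (1 + \<Gamma>) / f \<omega>)" for \<omega>
  have [measurable]: "q \<in> borel_measurable M"
    unfolding q_def[abs_def] by measurable
  have "(\<integral>\<^sup>+ \<omega>. ennreal (pos_part (ln (f \<omega> / (\<mu>p * (1 + \<Gamma>))))) \<partial>M)
      = (\<integral>\<^sup>+ \<omega>. ennreal (ln (1 + f \<omega> * q \<omega> / (1 + \<Gamma>))) \<partial>M)"
    using f_pos \<open>\<mu>p > 0\<close> \<open>\<Gamma> > 0\<close>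
    by (intro nn_integral_cong_AE) (auto elim!: eventually_mono simp: q_def pos_part_ln_eq_ln_waterfilling)
  also have "\<dots> \<le> (\<integral>\<^sup>+ \<omega>. ennreal (ln (1 + f \<omega> * q \<omega> / (1 + I \<omega>))) \<partial>M)"
  proof (rule nn_integral_ln_mean_interference_le)
    show "indep_var borel (\<lambda>\<omega>. f \<omega> * q \<omega>) borel I"
      using indep_var_compose[OF indep, of "\<lambda>t. t * pos_part (1 / \<mu>p - (1 + \<Gamma>) / t)" borel id borel]
      by (simp add: q_def o_def)
    show "AE \<omega> in M. 0 \<le> f \<omega> * q \<omega> \<and> 0 \<le> I \<omega>"
      using f_pos I_nonneg by eventually_elim (simp add: q_def pos_part_nonneg)
  qed (use I_mean \<open>\<Gamma> > 0\<close> in auto)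
  also have "\<dots> \<le> (\<integral>\<^sup>+ \<omega>. ennreal (pos_part (ln (f \<omega> / (\<mu>a * (1 + I \<omega>))))) \<partial>M)"
  proof (rule nn_integral_waterfilling_optimal)
    show "AE \<omega> in M. 0 < f \<omega> \<and> 0 < 1 + I \<omega> \<and> 0 \<le> q \<omega>"
      using f_pos I_nonneg by eventually_elim (simp add: q_def pos_part_nonneg)
  qed (use \<open>\<mu>a > 0\<close> mu_a mu_p in \<open>simp_all add: q_def\<close>)
  finally show ?thesis .
qed

end
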